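(* For all $0\le t<1$, $$\lim_{x\uparrow B^*\sqrt{1-t}}\frac{\partial}{\partial x}J^*(t,x)=\lim_{x\downarrow B^*\sqrt{1-t}}\frac{\partial}{\partial x}g(t,x),$$ $$\lim_{x\downarrow -B^*\sqrt{1-t}}\frac{\partial}{\partial x}J^*(t,x)=\lim_{x\uparrow -B^*\sqrt{1-t}}\frac{\partial}{\partial x}g(t,x),$$ where $$J^*(t,x)=\begin{cases}(1-t)^{n+1/2}(F_{2n+1}+G_{2n+1})(x/\sqrt{1-t})\,j(B^* ), & |x|<B^*\sqrt{1-t},\\ g(t,x), & |x|\ge B^*\sqrt{1-t}.\end{cases}$$
   Context: $n\ge0$ is an integer. $F_q(y):=\int_0^\infty u^{q-1}e^{yu-u^2/2}\,\mathrm{d}u$ and $G_q(y):=F_q(-y)$. $B^*>0$ is the unique zero of $B\mapsto(2n+1)-BF'_{2n+1}(B)/F_{2n+1}(B)$. $U(t,x)=(1-t)^{n+1/2}(B^* )^{2n+1}F_{2n+1}(x/\sqrt{1-t})/F_{2n+1}(B^* )$ if $x<B^*\sqrt{1-t}$, and $U(t,x)=x^{2n+1}$ otherwise. $g(t,x):=(U(t,x)-x^{2n+1})1_{\{x\le0\}}+(U(t,-x)+x^{2n+1})1_{\{x>0\}}$. $j(D):=\frac{1}{(F_{2n+1}+G_{2n+1})(D)}[D^{2n+1}+(B^* )^{2n+1}G_{2n+1}(D)/F_{2n+1}(B^* )]$. *)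

theory Defs
  imports "HOL-Analysis.Analysis"
begin

definition Fq :: "nat \<Rightarrow> real \<Rightarrow> real" where
  "Fq q y = integral {0..} (\<lambda>u. u ^ (q - 1) * exp (y * u - u\<^sup>2 / 2))"

definition Gq :: "nat \<Rightarrow> real \<Rightarrow> real" where
  "Gq q y = Fq q (- y)"

definition Bstar :: "nat \<Rightarrow> real" where
  "Bstar n = (THE B. B > 0 \<and>
      real (2*n+1) - B * deriv (Fq (2*n+1)) B / Fq (2*n+1) B = 0)"

definition Ufun :: "nat \<Rightarrow> real \<Rightarrow> real \<Rightarrow> real" where
  "Ufun n t x = (if x < Bstar n * sqrt (1 - t)
     then (1 - t) powr (real n + 1/2) * (Bstar n) ^ (2*n+1)
          * Fq (2*n+1) (x / sqrt (1 - t)) / Fq (2*n+1) (Bstar n)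
     else x ^ (2*n+1))"

definition gfun :: "nat \<Rightarrow> real \<Rightarrow> real \<Rightarrow> real" where
  "gfun n t x = (if x \<le> 0 then Ufun n t x - x ^ (2*n+1)
                 else Ufun n t (- x) + x ^ (2*n+1))"

definition jfun :: "nat \<Rightarrow> real \<Rightarrow> real" where
  "jfun n D = (D ^ (2*n+1) + (Bstar n) ^ (2*n+1) * Gq (2*n+1) D / Fq (2*n+1) (Bstar n))
              / (Fq (2*n+1) D + Gq (2*n+1) D)"

definition Jstar :: "nat \<Rightarrow> real \<Rightarrow> real \<Rightarrow> real" where
  "Jstar n t x = (if \<bar>x\<bar> < Bstar n * sqrt (1 - t)
     then (1 - t) powr (real n + 1/2)
          * (Fq (2*n+1) (x / sqrt (1 - t)) + Gq (2*n+1) (x / sqrt (1 - t)))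
          * jfun n (Bstar n)
     else gfun n t x)"

end

theory Submission
  imports Defs
begin

text \<open>
  With \<open>q = 2n+1\<close>, \<open>s = \<surd>(1-t)\<close>, \<open>a = B\<^sup>* s\<close>, both \<open>J\<^sup>*\<close> and \<open>g\<close> are, on each side of
  \<open>\<plusminus>a\<close>, explicit smooth expressions in \<open>F\<^sub>q(\<plusminus>x/s)\<close> and \<open>x\<^sup>q\<close>, since \<open>F\<^sub>q' = F\<^sub>q\<^sub>+\<^sub>1\<close>
  (differentiation under the integral) and \<open>j(B\<^sup>*) = (B\<^sup>*)\<^sup>q / F\<^sub>q(B\<^sup>*)\<close>. So the one-sided
  limits of the derivatives are just these expressions evaluated at \<open>\<plusminus>a\<close>, and they agree
  precisely because of the defining equation \<open>B\<^sup>* F\<^sub>q'(B\<^sup>*) = q F\<^sub>q(B\<^sup>*)\<close>. That \<open>B\<^sup>*\<close> is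
  well defined follows from log-convexity of \<open>F\<^sub>q\<close> (Cauchy-Schwarz): \<open>B F\<^sub>q'(B)/F\<^sub>q(B)\<close> is
  continuous, vanishes at \<open>0\<close>, is strictly increasing and unbounded on \<open>(0,\<infinity>)\<close>.
\<close>

lemma power_le_fact_mult_exp:
  fixes u :: real assumes "0 \<le> u"
  shows "u ^ k \<le> fact k * exp u"
proof -
  obtain t where t: "exp u = (\<Sum>m<Suc k. u ^ m / fact m) + exp t / fact (Suc k) * u ^ Suc k"
    using Maclaurin_exp_le[of u "Suc k"] by blast
  have "u ^ k / fact k \<le> (\<Sum>m<Suc k. u ^ m / fact m)"
    by (rule member_le_sum[where f = "\<lambda>m. u ^ m / fact m"]) (use assms in auto)
  also have "\<dots> \<le> exp u"
    unfolding t using assms by (intro add_increasing2) auto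
  finally show ?thesis by (simp add: field_simps)
qed

lemma gaussian_moment_integrand_le:
  fixes u c :: real assumes "0 \<le> u"
  shows "u ^ k * exp (c * u - u\<^sup>2 / 2) \<le> fact k * exp ((c + 2)\<^sup>2 / 2) * exp (- u)"
proof -
  have "u ^ k * exp (c * u - u\<^sup>2 / 2) \<le> fact k * exp u * exp (c * u - u\<^sup>2 / 2)"
    using power_le_fact_mult_exp[OF assms] by (intro mult_right_mono) auto
  also have "\<dots> = fact k * exp (u + c * u - u\<^sup>2 / 2)"
    by (simp add: exp_add[symmetric])
  also have "\<dots> \<le> fact k * exp ((c + 2)\<^sup>2 / 2 - u)"
    using zero_le_power2[of "u - (c + 2)"] by (simp add: power2_eq_square algebra_simps)
  also have "\<dots> = fact k * exp ((c + 2)\<^sup>2 / 2) * exp (- u)"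
    by (simp add: exp_add[symmetric])
  finally show ?thesis .
qed

lemma gaussian_moment_integrable:
  "(\<lambda>u::real. u ^ k * exp (c * u - u\<^sup>2 / 2)) integrable_on {0..}"
proof (rule integrable_on_all_intervals_integrable_bound)
  fix a b :: real
  have "{0..} \<inter> cbox a b = {max 0 a..b}" by auto
  moreover have "(\<lambda>u::real. u ^ k * exp (c * u - u\<^sup>2 / 2)) integrable_on {max 0 a..b}"
    by (intro integrable_continuous_interval continuous_intros) auto
  ultimately show "(\<lambda>u. if u \<in> {0..} then u ^ k * exp (c * u - u\<^sup>2 / 2) else 0)
      integrable_on cbox a b"
    unfolding integrable_restrict_Int by simp
next
  fix u :: real assume "u \<in> {0..}"
  then show "norm (u ^ k * exp (c * u - u\<^sup>2 / 2)) \<le> fact k * exp ((c + 2)\<^sup>2 / 2) * exp (- u)"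
    using gaussian_moment_integrand_le[of u k c] by simp
next
  show "(\<lambda>u. fact k * exp ((c + 2)\<^sup>2 / 2) * exp (- u)) integrable_on {0..}"
    using integrable_on_exp_minus_to_infinity[of 1 0] by (intro integrable_on_mult_right) simp
qed

lemma Fq_Suc: "Fq (Suc k) c = integral {0..} (\<lambda>u. u ^ k * exp (c * u - u\<^sup>2 / 2))"
  by (simp add: Fq_def)

lemma Fq_pos: "0 < Fq (Suc k) c"
proof -
  have "integral {1..2::real} (\<lambda>_. 0) < integral {1..2} (\<lambda>u. u ^ k * exp (c * u - u\<^sup>2 / 2))"
    by (rule integral_less_real) (auto intro!: continuous_intros)
  also have "\<dots> \<le> Fq (Suc k) c"
    unfolding Fq_Suc
    by (intro integral_subset_le gaussian_moment_integrable integrable_continuous_interval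
        continuous_intros) auto
  finally show ?thesis by simp
qed

lemma abs_exp_minus_one_minus_le: "\<bar>exp z - 1 - z\<bar> \<le> z\<^sup>2 * exp \<bar>z::real\<bar>"
proof -
  obtain t where t: "\<bar>t\<bar> \<le> \<bar>z\<bar>" "exp z = (\<Sum>m<2. z ^ m / fact m) + exp t / fact 2 * z ^ 2"
    using Maclaurin_exp_le[of z 2] by blast
  then have "\<bar>exp z - 1 - z\<bar> = exp t / 2 * z\<^sup>2"
    by (simp add: numeral_2_eq_2)
  also have "\<dots> \<le> exp \<bar>z\<bar> * z\<^sup>2"
  proof (rule mult_right_mono)
    show "exp t / 2 \<le> exp \<bar>z\<bar>"
      using t(1) exp_gt_zero[of t] exp_le_cancel_iff[of t "\<bar>z\<bar>"] by linarith
  qed simp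
  finally show ?thesis by (simp add: mult.commute)
qed

lemma gaussian_moment_integrand_increment_le:
  fixes u h y :: real assumes u: "0 \<le> u" and h: "\<bar>h\<bar> \<le> 1"
  shows "\<bar>u ^ k * exp ((y + h) * u - u\<^sup>2 / 2) - u ^ k * exp (y * u - u\<^sup>2 / 2)
           - h * (u ^ Suc k * exp (y * u - u\<^sup>2 / 2))\<bar>
         \<le> h\<^sup>2 * (u ^ Suc (Suc k) * exp ((y + 1) * u - u\<^sup>2 / 2))"
proof -
  have "\<bar>exp (h * u) - 1 - h * u\<bar> \<le> (h * u)\<^sup>2 * exp \<bar>h * u\<bar>"
    by (rule abs_exp_minus_one_minus_le)
  also have "\<dots> \<le> (h * u)\<^sup>2 * exp u"
    using u h by (intro mult_left_mono) (auto simp: abs_mult mult_left_le_one_le)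
  finally have rem: "\<bar>exp (h * u) - 1 - h * u\<bar> \<le> (h * u)\<^sup>2 * exp u" .
  have "u ^ k * exp ((y + h) * u - u\<^sup>2 / 2) - u ^ k * exp (y * u - u\<^sup>2 / 2)
           - h * (u ^ Suc k * exp (y * u - u\<^sup>2 / 2))
      = u ^ k * exp (y * u - u\<^sup>2 / 2) * (exp (h * u) - 1 - h * u)"
    by (simp add: algebra_simps exp_add[symmetric])
  also have "\<bar>\<dots>\<bar> = u ^ k * exp (y * u - u\<^sup>2 / 2) * \<bar>exp (h * u) - 1 - h * u\<bar>"
    using u by (simp add: abs_mult)
  also have "\<dots> \<le> u ^ k * exp (y * u - u\<^sup>2 / 2) * ((h * u)\<^sup>2 * exp u)"
    using u rem by (intro mult_left_mono) auto
  also have "\<dots> = h\<^sup>2 * (u ^ Suc (Suc k) * exp ((y + 1) * u - u\<^sup>2 / 2))"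
    by (simp add: algebra_simps power2_eq_square exp_add[symmetric])
  finally show ?thesis .
qed

lemma Fq_increment_le:
  assumes "\<bar>h\<bar> \<le> 1"
  shows "\<bar>Fq (Suc k) (y + h) - Fq (Suc k) y - h * Fq (Suc (Suc k)) y\<bar>
           \<le> h\<^sup>2 * Fq (Suc (Suc (Suc k))) (y + 1)"
proof -
  define w where "w k c u = u ^ k * exp (c * u - u\<^sup>2 / 2)" for k :: nat and c u :: real
  have wi: "w k c integrable_on {0..}" for k c
    unfolding w_def by (rule gaussian_moment_integrable)
  have Fw: "Fq (Suc k) c = integral {0..} (w k c)" for k c
    unfolding w_def Fq_Suc ..
  have "Fq (Suc k) (y + h) - Fq (Suc k) y - h * Fq (Suc (Suc k)) y
      = integral {0..} (\<lambda>u. w k (y + h) u - w k y u - h * w (Suc k) y u)"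
    unfolding Fw using wi
    by (simp add: integral_diff integral_mult_right integrable_diff integrable_on_mult_right)
  also have "\<bar>\<dots>\<bar> \<le> integral {0..} (\<lambda>u. h\<^sup>2 * w (Suc (Suc k)) (y + 1) u)"
    unfolding real_norm_def[symmetric]
  proof (rule integral_norm_bound_integral)
    show "(\<lambda>u. w k (y + h) u - w k y u - h * w (Suc k) y u) integrable_on {0..}"
      "(\<lambda>u. h\<^sup>2 * w (Suc (Suc k)) (y + 1) u) integrable_on {0..}"
      using wi by (auto intro!: integrable_diff integrable_on_mult_right)
  qed (use gaussian_moment_integrand_increment_le[OF _ assms] in \<open>simp add: w_def del: power_Suc\<close>)
  also have "\<dots> = h\<^sup>2 * Fq (Suc (Suc (Suc k))) (y + 1)"
    unfolding Fw by simp
  finally show ?thesis .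
qed

lemma Fq_has_real_derivative: "(Fq (Suc k) has_real_derivative Fq (Suc (Suc k)) y) (at y)"
proof -
  define C where "C = Fq (Suc (Suc (Suc k))) (y + 1)"
  have "((\<lambda>h. (Fq (Suc k) (y + h) - Fq (Suc k) y) / h - Fq (Suc (Suc k)) y) \<longlongrightarrow> 0) (at 0)"
  proof (rule Lim_null_comparison)
    have "eventually (\<lambda>h::real. h \<noteq> 0 \<and> \<bar>h\<bar> < 1) (at 0)"
      unfolding eventually_at by (auto intro!: exI[of _ 1] simp: dist_real_def)
    then show "eventually (\<lambda>h. norm ((Fq (Suc k) (y + h) - Fq (Suc k) y) / h - Fq (Suc (Suc k)) y)
        \<le> \<bar>h\<bar> * C) (at 0)"
    proof (rule eventually_mono)
      fix h :: real assume h: "h \<noteq> 0 \<and> \<bar>h\<bar> < 1"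
      have "norm ((Fq (Suc k) (y + h) - Fq (Suc k) y) / h - Fq (Suc (Suc k)) y)
          = \<bar>Fq (Suc k) (y + h) - Fq (Suc k) y - h * Fq (Suc (Suc k)) y\<bar> / \<bar>h\<bar>"
        using h by (simp add: field_simps)
      also have "\<dots> \<le> h\<^sup>2 * C / \<bar>h\<bar>"
        using Fq_increment_le[of h] h unfolding C_def by (intro divide_right_mono) auto
      also have "\<dots> = \<bar>h\<bar> * C"
        using h by (simp add: field_simps power2_eq_square)
      finally show "norm ((Fq (Suc k) (y + h) - Fq (Suc k) y) / h - Fq (Suc (Suc k)) y) \<le> \<bar>h\<bar> * C" .
    qed
    show "((\<lambda>h::real. \<bar>h\<bar> * C) \<longlongrightarrow> 0) (at 0)"
      by (auto intro!: tendsto_eq_intros)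
  qed
  then show ?thesis
    unfolding DERIV_def by (rule LIM_zero_cancel)
qed

lemma Fq_has_real_derivative_comp [derivative_intros]:
  "0 < q \<Longrightarrow> (f has_real_derivative f') (at x within S) \<Longrightarrow>
   ((\<lambda>x. Fq q (f x)) has_real_derivative Fq (q + 1) (f x) * f') (at x within S)"
  using DERIV_chain2[OF Fq_has_real_derivative[of "q - 1"]] by simp

lemma isCont_Fq_comp [continuous_intros]: "0 < q \<Longrightarrow> isCont f x \<Longrightarrow> isCont (\<lambda>x. Fq q (f x)) x"
  using isCont_o2[OF _ DERIV_isCont[OF Fq_has_real_derivative[of "q - 1"]]] by simp

lemma Fq_Cauchy_Schwarz: "(Fq (Suc (Suc k)) y)\<^sup>2 \<le> Fq (Suc (Suc (Suc k))) y * Fq (Suc k) y"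
proof -
  define w where "w k u = u ^ k * exp (y * u - u\<^sup>2 / 2)" for k :: nat and u :: real
  define l where "l = Fq (Suc (Suc k)) y / Fq (Suc k) y"
  have wi: "w k integrable_on {0..}" for k
    unfolding w_def by (rule gaussian_moment_integrable)
  have Fw: "Fq (Suc k) y = integral {0..} (w k)" for k
    unfolding w_def Fq_Suc ..
  have pos: "0 < Fq (Suc k) y" by (rule Fq_pos)
  have square: "(u - l)\<^sup>2 * w k u = w (Suc (Suc k)) u - 2 * l * w (Suc k) u + l\<^sup>2 * w k u" for u
    by (simp add: w_def power2_eq_square algebra_simps)
  have "0 \<le> integral {0..} (\<lambda>u. w (Suc (Suc k)) u - 2 * l * w (Suc k) u + l\<^sup>2 * w k u)"
  proof (rule integral_nonneg)
    show "(\<lambda>u. w (Suc (Suc k)) u - 2 * l * w (Suc k) u + l\<^sup>2 * w k u) integrable_on {0..}"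
      using wi by (intro integrable_add integrable_diff integrable_on_mult_right)
  next
    fix u :: real assume "u \<in> {0..}"
    then show "0 \<le> w (Suc (Suc k)) u - 2 * l * w (Suc k) u + l\<^sup>2 * w k u"
      unfolding square[symmetric] by (simp add: w_def)
  qed
  also have "\<dots> = Fq (Suc (Suc (Suc k))) y - 2 * l * Fq (Suc (Suc k)) y + l\<^sup>2 * Fq (Suc k) y"
    unfolding Fw using wi
    by (simp add: integral_add integral_diff integrable_diff integrable_on_mult_right)
  also have "\<dots> = Fq (Suc (Suc (Suc k))) y - (Fq (Suc (Suc k)) y)\<^sup>2 / Fq (Suc k) y"
    using pos by (simp add: l_def power2_eq_square field_simps)
  finally show ?thesis
    using pos by (simp add: field_simps)
qed

lemma Fq_log_deriv_mono:
  assumes "a \<le> b"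
  shows "Fq (Suc (Suc k)) a / Fq (Suc k) a \<le> Fq (Suc (Suc k)) b / Fq (Suc k) b"
  using assms
proof (rule DERIV_nonneg_imp_nondecreasing)
  fix x
  have "((\<lambda>y. Fq (Suc (Suc k)) y / Fq (Suc k) y) has_real_derivative
      (Fq (Suc (Suc (Suc k))) x * Fq (Suc k) x - (Fq (Suc (Suc k)) x)\<^sup>2) / (Fq (Suc k) x)\<^sup>2) (at x)"
    using Fq_pos[of k x]
    by (auto intro!: derivative_eq_intros simp: power2_eq_square)
  moreover have "0 \<le> (Fq (Suc (Suc (Suc k))) x * Fq (Suc k) x - (Fq (Suc (Suc k)) x)\<^sup>2) / (Fq (Suc k) x)\<^sup>2"
    using Fq_Cauchy_Schwarz[of k x] by simp
  ultimately show "\<exists>y. ((\<lambda>y. Fq (Suc (Suc k)) y / Fq (Suc k) y) has_real_derivative y) (at x) \<and> 0 \<le> y"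
    by blast
qed

lemma mult_Fq_log_deriv_strict_mono:
  assumes "0 < a" "a < b"
  shows "a * Fq (Suc (Suc k)) a / Fq (Suc k) a < b * Fq (Suc (Suc k)) b / Fq (Suc k) b"
proof -
  have "a * (Fq (Suc (Suc k)) a / Fq (Suc k) a) \<le> a * (Fq (Suc (Suc k)) b / Fq (Suc k) b)"
    using assms Fq_log_deriv_mono[of a b] by (intro mult_left_mono) auto
  also have "\<dots> < b * (Fq (Suc (Suc k)) b / Fq (Suc k) b)"
    using assms Fq_pos[of "Suc k" b] Fq_pos[of k b] by (intro mult_strict_right_mono) auto
  finally show ?thesis by simp
qed

lemma ex1_mult_Fq_log_deriv_eq:
  assumes "0 < r"
  shows "\<exists>!B. 0 < B \<and> B * Fq (Suc (Suc k)) B / Fq (Suc k) B = r"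
proof (rule ex_ex1I)
  define \<rho> where "\<rho> B = Fq (Suc (Suc k)) B / Fq (Suc k) B" for B
  define B\<^sub>0 where "B\<^sub>0 = r / \<rho> 0"
  have "0 < \<rho> 0"
    unfolding \<rho>_def using Fq_pos[of "Suc k"] Fq_pos[of k] by simp
  then have "0 < B\<^sub>0"
    unfolding B\<^sub>0_def using assms by auto
  have "r = B\<^sub>0 * \<rho> 0"
    unfolding B\<^sub>0_def using \<open>0 < \<rho> 0\<close> by auto
  also have "B\<^sub>0 * \<rho> 0 \<le> B\<^sub>0 * \<rho> B\<^sub>0"
    unfolding \<rho>_def using \<open>0 < B\<^sub>0\<close> Fq_log_deriv_mono[of 0 B\<^sub>0 k] by (intro mult_left_mono) auto
  finally have "r \<le> B\<^sub>0 * \<rho> B\<^sub>0" .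
  moreover have "isCont (\<lambda>B. B * \<rho> B) x" for x
    unfolding \<rho>_def using Fq_pos[of k x] by (intro continuous_intros) auto
  ultimately obtain B where "0 \<le> B" "B * \<rho> B = r"
    using IVT[of "\<lambda>B. B * \<rho> B" 0 r B\<^sub>0] \<open>0 < B\<^sub>0\<close> assms by auto
  moreover have "B \<noteq> 0"
    using \<open>B * \<rho> B = r\<close> assms by auto
  ultimately show "\<exists>B. 0 < B \<and> B * Fq (Suc (Suc k)) B / Fq (Suc k) B = r"
    unfolding \<rho>_def by (intro exI[of _ B]) auto
next
  fix B B' assume "0 < B \<and> B * Fq (Suc (Suc k)) B / Fq (Suc k) B = r"
    "0 < B' \<and> B' * Fq (Suc (Suc k)) B' / Fq (Suc k) B' = r"
  then show "B = B'"
    using mult_Fq_log_deriv_strict_mono[of B B' k] mult_Fq_log_deriv_strict_mono[of B' B k]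
    by (cases B B' rule: linorder_cases) auto
qed

lemma Bstar_characterization:
  "0 < Bstar n \<and> Bstar n * Fq (2*n+2) (Bstar n) / Fq (2*n+1) (Bstar n) = real (2*n+1)"
proof -
  have "deriv (Fq (2*n+1)) B = Fq (2*n+2) B" for B
    using DERIV_imp_deriv[OF Fq_has_real_derivative[of "2*n" B]] by simp
  then have "Bstar n = (THE B. 0 < B \<and> B * Fq (2*n+2) B / Fq (2*n+1) B = real (2*n+1))"
    unfolding Bstar_def by (intro arg_cong[where f = The] ext) auto
  with theI'[OF ex1_mult_Fq_log_deriv_eq[of "real (2*n+1)" "2*n"]] show ?thesis
    by (simp add: numeral_2_eq_2)
qed

lemma Bstar_pos: "0 < Bstar n"
  using Bstar_characterization by blast

lemma Bstar_equation: "Bstar n * Fq (2*n+2) (Bstar n) = real (2*n+1) * Fq (2*n+1) (Bstar n)"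
  using Bstar_characterization[of n] Fq_pos[of "2*n" "Bstar n"] by (simp add: field_simps)

lemma jfun_Bstar: "jfun n (Bstar n) = Bstar n ^ (2*n+1) / Fq (2*n+1) (Bstar n)"
proof -
  define F G where "F = Fq (2*n+1) (Bstar n)" and "G = Fq (2*n+1) (- Bstar n)"
  have "0 < F" "0 < G"
    unfolding F_def G_def using Fq_pos by simp_all
  then have "Bstar n ^ (2*n+1) + Bstar n ^ (2*n+1) * G / F = Bstar n ^ (2*n+1) / F * (F + G)"
    by (simp add: field_simps)
  then show ?thesis
    unfolding jfun_def Gq_def F_def[symmetric] G_def[symmetric] using \<open>0 < F\<close> \<open>0 < G\<close> by simp
qed

lemma jfun_Bstar_mult_Fq: "jfun n (Bstar n) * Fq (2*n+2) (Bstar n) = real (2*n+1) * Bstar n ^ (2*n)"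
proof -
  have "jfun n (Bstar n) * Fq (2*n+2) (Bstar n)
      = Bstar n ^ (2*n) * (Bstar n * Fq (2*n+2) (Bstar n)) / Fq (2*n+1) (Bstar n)"
    unfolding jfun_Bstar by (simp add: field_simps)
  also have "\<dots> = real (2*n+1) * Bstar n ^ (2*n)"
    unfolding Bstar_equation using Fq_pos[of "2*n" "Bstar n"] by simp
  finally show ?thesis .
qed

lemma powr_half_odd: "0 \<le> x \<Longrightarrow> x powr (real n + 1/2) = sqrt x ^ (2*n+1)"
  by (cases "x = 0") (simp_all add: powr_add powr_realpow powr_half_sqrt power_mult real_sqrt_pow2)

lemma Jstar_eq_inside:
  assumes "t < 1" "\<bar>x\<bar> < Bstar n * sqrt (1 - t)"
  shows "Jstar n t x = sqrt (1 - t) ^ (2*n+1) * jfun n (Bstar n)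
           * (Fq (2*n+1) (x / sqrt (1 - t)) + Fq (2*n+1) (- (x / sqrt (1 - t))))"
  using assms by (simp add: Jstar_def Gq_def powr_half_odd)

lemma Ufun_eq_below:
  assumes "t < 1" "x < Bstar n * sqrt (1 - t)"
  shows "Ufun n t x = sqrt (1 - t) ^ (2*n+1) * jfun n (Bstar n) * Fq (2*n+1) (x / sqrt (1 - t))"
  using assms by (simp add: Ufun_def jfun_Bstar powr_half_odd)

lemma gfun_eq_of_nonpos:
  assumes "t < 1" "x \<le> 0"
  shows "gfun n t x = sqrt (1 - t) ^ (2*n+1) * jfun n (Bstar n) * Fq (2*n+1) (x / sqrt (1 - t))
           - x ^ (2*n+1)"
proof -
  have "x < Bstar n * sqrt (1 - t)"
    using assms Bstar_pos[of n] by (smt (verit) mult_pos_pos real_sqrt_gt_zero)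
  then show ?thesis
    using assms by (simp add: gfun_def Ufun_eq_below)
qed

lemma gfun_eq_of_pos:
  assumes "t < 1" "0 < x"
  shows "gfun n t x = sqrt (1 - t) ^ (2*n+1) * jfun n (Bstar n) * Fq (2*n+1) (- (x / sqrt (1 - t)))
           + x ^ (2*n+1)"
proof -
  have "- x < Bstar n * sqrt (1 - t)"
    using assms Bstar_pos[of n] by (smt (verit) mult_pos_pos real_sqrt_gt_zero)
  then show ?thesis
    using assms by (simp add: gfun_def Ufun_eq_below)
qed

lemma tendsto_deriv_if_eq_on_open:
  fixes f g g' :: "real \<Rightarrow> real"
  assumes "open S" "eventually (\<lambda>x. x \<in> S) (at p within T)"
    and "\<And>x. x \<in> S \<Longrightarrow> f x = g x" "\<And>x. x \<in> S \<Longrightarrow> (g has_real_derivative g' x) (at x)"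
    and "isCont g' p"
  shows "(deriv f \<longlongrightarrow> g' p) (at p within T)"
proof -
  have "deriv f x = g' x" if "x \<in> S" for x
    by (rule DERIV_imp_deriv, rule has_field_derivative_transform_within_open[of g _ _ S])
       (use assms that in auto)
  then have "eventually (\<lambda>x. g' x = deriv f x) (at p within T)"
    using assms(2) by (auto elim: eventually_mono)
  moreover have "(g' \<longlongrightarrow> g' p) (at p within T)"
    using assms(5) unfolding isCont_def by (rule tendsto_within_subset) simp
  ultimately show ?thesis
    by (blast intro: Lim_transform_eventually)
qed

definition boundary_slope :: "nat \<Rightarrow> real \<Rightarrow> real" where
  "boundary_slope n t = sqrt (1 - t) ^ (2*n) * jfun n (Bstar n)
     * (Fq (2*n+2) (Bstar n) - Fq (2*n+2) (- Bstar n))"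

lemma tendsto_deriv_Jstar_boundary:
  assumes "t < 1"
  shows "(deriv (Jstar n t) \<longlongrightarrow> boundary_slope n t) (at_left (Bstar n * sqrt (1 - t)))"
    and "(deriv (Jstar n t) \<longlongrightarrow> - boundary_slope n t) (at_right (- Bstar n * sqrt (1 - t)))"
proof -
  define s c where "s = sqrt (1 - t)" and "c = jfun n (Bstar n)"
  define a where "a = Bstar n * s"
  define J' where "J' x = s ^ (2*n) * c * (Fq (2*n+2) (x / s) - Fq (2*n+2) (- (x / s)))" for x
  have "0 < s" "0 < a"
    using assms Bstar_pos[of n] by (simp_all add: s_def a_def)
  have Jstar_eq: "Jstar n t x = s ^ (2*n+1) * c * (Fq (2*n+1) (x / s) + Fq (2*n+1) (- (x / s)))"
    if "x \<in> {-a<..<a}" for x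
    using Jstar_eq_inside[OF assms] that by (simp add: s_def c_def a_def abs_less_iff)
  have deriv: "((\<lambda>x. s ^ (2*n+1) * c * (Fq (2*n+1) (x / s) + Fq (2*n+1) (- (x / s))))
      has_real_derivative J' x) (at x)" for x
    unfolding J'_def using \<open>0 < s\<close> by (auto intro!: derivative_eq_intros simp: field_simps)
  have cont: "isCont J' x" for x
    unfolding J'_def using \<open>0 < s\<close> by (safe intro!: continuous_intros) simp_all
  have "(deriv (Jstar n t) \<longlongrightarrow> J' a) (at_left a)"
    by (rule tendsto_deriv_if_eq_on_open[OF _ eventually_at_left_real[of "- a"] Jstar_eq deriv cont])
       (use \<open>0 < a\<close> in auto)
  moreover have "(deriv (Jstar n t) \<longlongrightarrow> J' (- a)) (at_right (- a))"
    by (rule tendsto_deriv_if_eq_on_open[OF _ eventually_at_right_real[of "- a" a] Jstar_eq deriv cont])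
       (use \<open>0 < a\<close> in auto)
  moreover have "J' a = boundary_slope n t" "J' (- a) = - boundary_slope n t"
    using \<open>0 < s\<close> by (simp_all add: J'_def a_def s_def c_def boundary_slope_def algebra_simps)
  ultimately show "(deriv (Jstar n t) \<longlongrightarrow> boundary_slope n t) (at_left (Bstar n * sqrt (1 - t)))"
    "(deriv (Jstar n t) \<longlongrightarrow> - boundary_slope n t) (at_right (- Bstar n * sqrt (1 - t)))"
    unfolding a_def s_def by simp_all
qed

lemma tendsto_deriv_gfun_boundary:
  assumes "t < 1"
  shows "(deriv (gfun n t) \<longlongrightarrow> boundary_slope n t) (at_right (Bstar n * sqrt (1 - t)))"
    and "(deriv (gfun n t) \<longlongrightarrow> - boundary_slope n t) (at_left (- Bstar n * sqrt (1 - t)))"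
proof -
  define s c where "s = sqrt (1 - t)" and "c = jfun n (Bstar n)"
  define a where "a = Bstar n * s"
  define gR' where "gR' x = real (2*n+1) * x ^ (2*n) - s ^ (2*n) * c * Fq (2*n+2) (- (x / s))" for x
  define gL' where "gL' x = s ^ (2*n) * c * Fq (2*n+2) (x / s) - real (2*n+1) * x ^ (2*n)" for x
  have "0 < s" "0 < a"
    using assms Bstar_pos[of n] by (simp_all add: s_def a_def)
  have gfun_right: "gfun n t x = s ^ (2*n+1) * c * Fq (2*n+1) (- (x / s)) + x ^ (2*n+1)"
    if "x \<in> {a<..<a + 1}" for x
    using gfun_eq_of_pos[OF assms] that \<open>0 < a\<close> by (simp add: s_def c_def)
  have gfun_left: "gfun n t x = s ^ (2*n+1) * c * Fq (2*n+1) (x / s) - x ^ (2*n+1)"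
    if "x \<in> {- a - 1<..<- a}" for x
    using gfun_eq_of_nonpos[OF assms] that \<open>0 < a\<close> by (simp add: s_def c_def)
  have dpow: "((\<lambda>x. x ^ (2*n+1)) has_real_derivative real (2*n+1) * x ^ (2*n)) (at x)" for x
    using DERIV_pow[of "2*n+1" x] by simp
  have deriv_right: "((\<lambda>x. s ^ (2*n+1) * c * Fq (2*n+1) (- (x / s)) + x ^ (2*n+1))
      has_real_derivative gR' x) (at x)" for x
    unfolding gR'_def diff_conv_add_uminus add.commute[of _ \<open>- _\<close>] using \<open>0 < s\<close>
    by (intro DERIV_add dpow) (auto intro!: derivative_eq_intros simp: field_simps)
  have deriv_left: "((\<lambda>x. s ^ (2*n+1) * c * Fq (2*n+1) (x / s) - x ^ (2*n+1))
      has_real_derivative gL' x) (at x)" for x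
    unfolding gL'_def using \<open>0 < s\<close>
    by (intro DERIV_diff dpow) (auto intro!: derivative_eq_intros simp: field_simps)
  have cont: "isCont gR' x" "isCont gL' x" for x
    unfolding gR'_def gL'_def using \<open>0 < s\<close> by (safe intro!: continuous_intros) simp_all
  have "(deriv (gfun n t) \<longlongrightarrow> gR' a) (at_right a)"
    by (rule tendsto_deriv_if_eq_on_open[OF _ eventually_at_right_real[of a "a + 1"]
          gfun_right deriv_right cont(1)]) auto
  moreover have "(deriv (gfun n t) \<longlongrightarrow> gL' (- a)) (at_left (- a))"
    by (rule tendsto_deriv_if_eq_on_open[OF _ eventually_at_left_real[of "- a - 1"]
          gfun_left deriv_left cont(2)]) auto
  moreover have "gR' a = boundary_slope n t" "gL' (- a) = - boundary_slope n t"
  proof -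
    have "gR' a - boundary_slope n t
        = s ^ (2*n) * (real (2*n+1) * Bstar n ^ (2*n) - c * Fq (2*n+2) (Bstar n))"
      "gL' (- a) + boundary_slope n t
        = s ^ (2*n) * (c * Fq (2*n+2) (Bstar n) - real (2*n+1) * Bstar n ^ (2*n))"
      using \<open>0 < s\<close> by (simp_all add: gR'_def gL'_def a_def s_def c_def boundary_slope_def
          power_mult_distrib algebra_simps)
    then show "gR' a = boundary_slope n t" "gL' (- a) = - boundary_slope n t"
      unfolding c_def jfun_Bstar_mult_Fq by simp_all
  qed
  ultimately show "(deriv (gfun n t) \<longlongrightarrow> boundary_slope n t) (at_right (Bstar n * sqrt (1 - t)))"
    "(deriv (gfun n t) \<longlongrightarrow> - boundary_slope n t) (at_left (- Bstar n * sqrt (1 - t)))"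
    unfolding a_def s_def by simp_all
qed

theorem lemma4p5:
  fixes n :: nat and t :: real
  assumes "0 \<le> t" and "t < 1"
  shows "(\<exists>L. ((\<lambda>x. deriv (Jstar n t) x) \<longlongrightarrow> L) (at_left (Bstar n * sqrt (1 - t)))
             \<and> ((\<lambda>x. deriv (gfun n t) x) \<longlongrightarrow> L) (at_right (Bstar n * sqrt (1 - t))))
       \<and> (\<exists>L. ((\<lambda>x. deriv (Jstar n t) x) \<longlongrightarrow> L) (at_right (- Bstar n * sqrt (1 - t)))
             \<and> ((\<lambda>x. deriv (gfun n t) x) \<longlongrightarrow> L) (at_left (- Bstar n * sqrt (1 - t))))"
  using tendsto_deriv_Jstar_boundary[OF assms(2)] tendsto_deriv_gfun_boundary[OF assms(2)]
  by blast

end
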